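(* Let $\mathcal{H}$ be a Hilbert space and let $f,g$ be holomorphic mappings from $\mathbb{C}^n$ to $\mathcal{H}$. Put $r(z,\overline w)=\langle f(z),f(w)\rangle-\langle g(z),g(w)\rangle$. Then the inequality $r(z,\overline z)\,r(w,\overline w)\ge |r(z,\overline w)|^2$ holds for all $z,w\in\mathbb{C}^n$ if and only if for every pair of points $z,w\in\mathbb{C}^n$, $$\|f(z)\otimes g(w)-f(w)\otimes g(z)\|^2\le \|f(z)\|^2\|f(w)\|^2-|\langle f(z),f(w)\rangle|^2+\|g(z)\|^2\|g(w)\|^2-|\langle g(z),g(w)\rangle|^2,$$ where the norm on the left is that of the Hilbert space tensor product $\mathcal{H}\otimes\mathcal{H}$.
   Context: The inner product on $\mathcal{H}\otimes\mathcal{H}$ satisfies $\langle u_1\otimes v_1,u_2\otimes v_2\rangle=\langle u_1,u_2\rangle\langle v_1,v_2\rangle$. *)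

theory Defs
  imports "HOL-Analysis.Analysis"
begin

text \<open>Complex vector spaces, complex inner product spaces and complex Hilbert spaces.
  The inner product is linear in the first and conjugate-linear in the second argument.\<close>

class complex_vector = real_vector +
  fixes scaleC :: "complex \<Rightarrow> 'a \<Rightarrow> 'a"
  assumes scaleC_add_right: "scaleC a (x + y) = scaleC a x + scaleC a y"
    and scaleC_add_left: "scaleC (a + b) x = scaleC a x + scaleC b x"
    and scaleC_scaleC: "scaleC a (scaleC b x) = scaleC (a * b) x"
    and scaleC_one: "scaleC 1 x = x"
    and scaleR_scaleC: "scaleR r x = scaleC (complex_of_real r) x"

class complex_inner = complex_vector + real_normed_vector +
  fixes cinner :: "'a \<Rightarrow> 'a \<Rightarrow> complex"
  assumes cinner_commute: "cinner x y = cnj (cinner y x)"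
    and cinner_add_left: "cinner (x + y) z = cinner x z + cinner y z"
    and cinner_scaleC_left: "cinner (scaleC c x) y = c * cinner x y"
    and cinner_ge_zero: "0 \<le> Re (cinner x x)"
    and cinner_eq_zero_iff: "cinner x x = 0 \<longleftrightarrow> x = 0"
    and norm_eq_sqrt_cinner: "norm x = sqrt (Re (cinner x x))"

class chilbert_space = complex_inner + complete_space

definition holomorphic_map :: "(complex^'n \<Rightarrow> 'a::{complex_vector,real_normed_vector}) \<Rightarrow> bool" where
  "holomorphic_map f \<longleftrightarrow>
     (\<forall>z. \<exists>L. (f has_derivative L) (at z) \<and> (\<forall>c v. L (c *s v) = scaleC c (L v)))"

text \<open>A realisation of the Hilbert space tensor product \<open>H \<otimes> H\<close>: a bilinear map into a
  Hilbert space with \<open>\<langle>u1\<otimes>v1, u2\<otimes>v2\<rangle> = \<langle>u1,u2\<rangle>\<langle>v1,v2\<rangle>\<close>.\<close>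

definition is_tensor_map :: "('h::complex_inner \<Rightarrow> 'h \<Rightarrow> 't::complex_inner) \<Rightarrow> bool" where
  "is_tensor_map T \<longleftrightarrow>
     (\<forall>x y z. T (x + y) z = T x z + T y z) \<and>
     (\<forall>x y z. T x (y + z) = T x y + T x z) \<and>
     (\<forall>c x y. T (scaleC c x) y = scaleC c (T x y)) \<and>
     (\<forall>c x y. T x (scaleC c y) = scaleC c (T x y)) \<and>
     (\<forall>u1 v1 u2 v2. cinner (T u1 v1) (T u2 v2) = cinner u1 u2 * cinner v1 v2)"

end

theory Submission
  imports Defs
begin

text \<open>Write \<open>a = f z\<close>, \<open>b = f w\<close>, \<open>c = g z\<close>, \<open>d = g w\<close>. Expanding
  \<open>\<parallel>a \<otimes> d - b \<otimes> c\<parallel>\<^sup>2\<close> with \<open>\<langle>u\<^sub>1 \<otimes> v\<^sub>1, u\<^sub>2 \<otimes> v\<^sub>2\<rangle> = \<langle>u\<^sub>1,u\<^sub>2\<rangle>\<langle>v\<^sub>1,v\<^sub>2\<rangle>\<close> shows that the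
  right-hand side minus the left-hand side of the tensor inequality is exactly
  \<open>r(z,z) r(w,w) - |r(z,w)|\<^sup>2\<close>. So the two conditions agree pointwise, for arbitrary
  vectors.\<close>

lemma cinner_diff_left: "cinner (x - y) (z::'a::complex_inner) = cinner x z - cinner y z"
  using cinner_add_left[of "x - y" y z] by simp

lemma cinner_diff_right: "cinner (z::'a::complex_inner) (x - y) = cinner z x - cinner z y"
  by (metis cinner_diff_left cinner_commute complex_cnj_diff)

lemma Im_cinner_self: "Im (cinner (x::'a::complex_inner) x) = 0"
  using cinner_commute[of x x] by (metis cnj.sel(2) equal_neg_zero)

lemma power2_norm_eq_cinner: "(norm (x::'a::complex_inner))\<^sup>2 = Re (cinner x x)"
  by (simp add: norm_eq_sqrt_cinner cinner_ge_zero)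

lemma power2_norm_diff:
  "(norm ((x::'a::complex_inner) - y))\<^sup>2 = (norm x)\<^sup>2 + (norm y)\<^sup>2 - 2 * Re (cinner x y)"
proof -
  have "Re (cinner y x) = Re (cinner x y)"
    using cinner_commute[of y x] by simp
  then show ?thesis
    by (simp add: power2_norm_eq_cinner cinner_diff_left cinner_diff_right)
qed

lemma tensor_map_cinner:
  "is_tensor_map T \<Longrightarrow> cinner (T u\<^sub>1 v\<^sub>1) (T u\<^sub>2 v\<^sub>2) = cinner u\<^sub>1 u\<^sub>2 * cinner v\<^sub>1 v\<^sub>2"
  unfolding is_tensor_map_def by blast

lemma power2_norm_tensor_diff:
  fixes T :: "'h::complex_inner \<Rightarrow> 'h \<Rightarrow> 't::complex_inner"
  assumes "is_tensor_map T"
  shows "(norm (T a d - T b c))\<^sup>2 = (norm a)\<^sup>2 * (norm d)\<^sup>2 + (norm b)\<^sup>2 * (norm c)\<^sup>2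
           - 2 * (Re (cinner a b) * Re (cinner c d) + Im (cinner a b) * Im (cinner c d))"
proof -
  have "(norm (T a d - T b c))\<^sup>2
      = Re (cinner a a * cinner d d) + Re (cinner b b * cinner c c) - 2 * Re (cinner a b * cinner d c)"
    unfolding power2_norm_diff unfolding power2_norm_eq_cinner by (simp add: tensor_map_cinner[OF assms])
  moreover have "cinner d c = cnj (cinner c d)"
    by (rule cinner_commute)
  ultimately show ?thesis
    by (simp add: power2_norm_eq_cinner Im_cinner_self)
qed

lemma tensor_gram_defect_eq:
  fixes T :: "'h::complex_inner \<Rightarrow> 'h \<Rightarrow> 't::complex_inner"
  assumes "is_tensor_map T"
  shows "(norm a)\<^sup>2 * (norm b)\<^sup>2 - (cmod (cinner a b))\<^sup>2
           + (norm c)\<^sup>2 * (norm d)\<^sup>2 - (cmod (cinner c d))\<^sup>2 - (norm (T a d - T b c))\<^sup>2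
       = Re (cinner a a - cinner c c) * Re (cinner b b - cinner d d)
           - (cmod (cinner a b - cinner c d))\<^sup>2"
  unfolding power2_norm_tensor_diff[OF assms] unfolding cmod_power2 power2_norm_eq_cinner
  by (simp add: power2_eq_square algebra_simps)

theorem proposition7p1:
  fixes f g :: "complex^'n \<Rightarrow> 'h::chilbert_space"
    and T :: "'h \<Rightarrow> 'h \<Rightarrow> 't::chilbert_space"
    and r :: "complex^'n \<Rightarrow> complex^'n \<Rightarrow> complex"
  assumes "holomorphic_map f" and "holomorphic_map g"
    and "is_tensor_map T"
    and r_def: "\<And>z w. r z w = cinner (f z) (f w) - cinner (g z) (g w)"
  shows "(\<forall>z w. Re (r z z) * Re (r w w) \<ge> (cmod (r z w))\<^sup>2) \<longleftrightarrow>
         (\<forall>z w. (norm (T (f z) (g w) - T (f w) (g z)))\<^sup>2 \<le>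
                (norm (f z))\<^sup>2 * (norm (f w))\<^sup>2 - (cmod (cinner (f z) (f w)))\<^sup>2
              + (norm (g z))\<^sup>2 * (norm (g w))\<^sup>2 - (cmod (cinner (g z) (g w)))\<^sup>2)"
proof -
  have "Re (r z z) * Re (r w w) \<ge> (cmod (r z w))\<^sup>2 \<longleftrightarrow>
        (norm (T (f z) (g w) - T (f w) (g z)))\<^sup>2 \<le>
          (norm (f z))\<^sup>2 * (norm (f w))\<^sup>2 - (cmod (cinner (f z) (f w)))\<^sup>2
        + (norm (g z))\<^sup>2 * (norm (g w))\<^sup>2 - (cmod (cinner (g z) (g w)))\<^sup>2" for z w
    using tensor_gram_defect_eq[OF assms(3), of "f z" "f w" "g z" "g w"]
    unfolding r_def by linarith
  then show ?thesis
    by blast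
qed

end
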